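(* Let $F_0$ and $F_s$ be distribution functions, $U_r(t):=F_r^{\leftarrow}(1-1/t)=\bigl(1/(1-F_r)\bigr)^{\leftarrow}(t)$ for $t>1$, $r\in\{0,s\}$, and let $c\in\mathbb{R}$, $s\ge0$. Suppose $F_0$ is in the max-domain of attraction of $G_\gamma(x)=\exp\{-(1+\gamma x)^{-1/\gamma}\}$ with $\gamma>0$. Then $$\lim_{x\to\infty}\frac{1-F_s(x)}{1-F_0(x)}=e^{cs}\quad\Longleftrightarrow\quad\lim_{t\to\infty}\frac{U_s(t)}{U_0(t)}=e^{c\gamma s}.$$
   Context: $F^{\leftarrow}$ denotes the generalized (left-continuous) inverse. For $\gamma>0$ the right endpoint of $F_0$ is $+\infty$. *)

theory Defs
  imports "HOL-Analysis.Analysis"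
begin

definition distribution_function :: "(real \<Rightarrow> real) \<Rightarrow> bool" where
  "distribution_function F \<longleftrightarrow>
     mono F \<and> (\<forall>x. continuous (at_right x) F) \<and>
     (F \<longlongrightarrow> 0) at_bot \<and> (F \<longlongrightarrow> 1) at_top"

definition gen_inv :: "(real \<Rightarrow> real) \<Rightarrow> real \<Rightarrow> real" where
  "gen_inv F p = Inf {x. p \<le> F x}"

definition tail_quantile :: "(real \<Rightarrow> real) \<Rightarrow> real \<Rightarrow> real" where
  "tail_quantile F t = gen_inv F (1 - 1 / t)"

definition gev :: "real \<Rightarrow> real \<Rightarrow> real" where
  "gev \<gamma> x =
     (if \<gamma> = 0 then exp (- exp (- x))
      else if 1 + \<gamma> * x > 0 then exp (- ((1 + \<gamma> * x) powr (- 1 / \<gamma>)))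
      else if \<gamma> > 0 then 0 else 1)"

definition max_domain_of_attraction :: "(real \<Rightarrow> real) \<Rightarrow> real \<Rightarrow> bool" where
  "max_domain_of_attraction F \<gamma> \<longleftrightarrow>
     (\<exists>a b :: nat \<Rightarrow> real. (\<forall>n. a n > 0) \<and>
        (\<forall>x. isCont (gev \<gamma>) x \<longrightarrow>
             (\<lambda>n. F (a n * x + b n) ^ n) \<longlonglongrightarrow> gev \<gamma> x))"

end

theory Submission
  imports Defs
begin

text \<open>Write \<open>V = 1 - F\<^sub>0\<close>. The domain-of-attraction condition gives
  \<open>n V(d\<^sub>n + e\<^sub>n z) \<rightarrow> z powr (-1/\<gamma>)\<close> for \<open>z > 0\<close>. Comparing the indices \<open>n\<close> and \<open>n div 2\<close>
  yields \<open>e\<^sub>n / e\<^sub>n\<^sub>/\<^sub>2 \<rightarrow> 2 powr \<gamma>\<close> and \<open>d\<^sub>n / e\<^sub>n \<rightarrow> 0\<close>; hence \<open>V\<close> never vanishes and is regularly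
  varying with index \<open>-1/\<gamma>\<close>. For such \<open>V\<close>, the Galois connections
  \<open>U(t) \<le> x \<longleftrightarrow> 1 - F(x) \<le> 1/t\<close> turn a limit \<open>(1 - F\<^sub>s)/V \<rightarrow> \<lambda>\<close> into \<open>U\<^sub>s/U\<^sub>0 \<rightarrow> \<lambda> powr \<gamma>\<close> and
  back, since rescaling the argument of \<open>V\<close> by \<open>\<theta>\<close> rescales its values by \<open>\<theta> powr (-1/\<gamma>)\<close>.\<close>

section \<open>Distribution functions and tail quantiles\<close>

lemma distribution_function_bounds:
  assumes "distribution_function F"
  shows "0 \<le> F x" "F x \<le> 1"
proof -
  have m: "mono F" and t0: "(F \<longlongrightarrow> 0) at_bot" and t1: "(F \<longlongrightarrow> 1) at_top"
    using assms by (auto simp: distribution_function_def)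
  have "eventually (\<lambda>y. F y \<le> F x) at_bot"
    using m by (auto simp: eventually_at_bot_linorder mono_def)
  then show "0 \<le> F x" using tendsto_upperbound[OF t0] by auto
  have "eventually (\<lambda>y. F x \<le> F y) at_top"
    using m by (auto simp: eventually_at_top_linorder mono_def)
  then show "F x \<le> 1" using tendsto_lowerbound[OF t1] by auto
qed

lemma gen_inv_le_iff:
  assumes "distribution_function F" "0 < p" "p < 1"
  shows "gen_inv F p \<le> x \<longleftrightarrow> p \<le> F x"
proof -
  have m: "mono F" and t0: "(F \<longlongrightarrow> 0) at_bot" and t1: "(F \<longlongrightarrow> 1) at_top"
    and rc: "\<And>x. continuous (at_right x) F"
    using assms by (auto simp: distribution_function_def)
  define S where "S = {x. p \<le> F x}"
  have "eventually (\<lambda>y. F y > p) at_top" using t1 assms(3) by (rule order_tendstoD)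
  then obtain y0 where "F y0 > p" by (auto simp: eventually_at_top_linorder)
  then have ne: "S \<noteq> {}" unfolding S_def by (auto intro!: exI[of _ y0])
  have "eventually (\<lambda>y. F y < p) at_bot" using t0 assms(2) by (rule order_tendstoD)
  then obtain b where b: "\<And>y. y \<le> b \<Longrightarrow> F y < p" by (auto simp: eventually_at_bot_linorder)
  have bdd: "bdd_below S"
    unfolding S_def bdd_below_def by (rule exI[of _ b]) (auto, metis b not_le linorder_le_less_linear less_le_not_le)
  have inf_in_S: "p \<le> F (Inf S)"
  proof (rule tendsto_lowerbound)
    show "(F \<longlongrightarrow> F (Inf S)) (at_right (Inf S))"
      using rc[of "Inf S"] by (simp add: continuous_within)
    show "\<forall>\<^sub>F y in at_right (Inf S). p \<le> F y"
    proof (rule eventually_at_rightI[of "Inf S" "Inf S + 1"])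
      fix y assume "y \<in> {Inf S<..<Inf S + 1}"
      then obtain s where "s \<in> S" "s < y" using cInf_less_iff[OF ne bdd] by auto
      then show "p \<le> F y" using m unfolding S_def mono_def by (meson order.trans less_imp_le mem_Collect_eq)
    qed auto
  qed simp
  show ?thesis
  proof
    assume "gen_inv F p \<le> x"
    then have "Inf S \<le> x" by (simp add: gen_inv_def S_def)
    then show "p \<le> F x" using inf_in_S m by (meson mono_def order.trans)
  next
    assume "p \<le> F x"
    then have "x \<in> S" by (simp add: S_def)
    then show "gen_inv F p \<le> x" using bdd by (simp add: gen_inv_def S_def[symmetric] cInf_lower)
  qed
qed

lemma tail_quantile_le_iff:
  assumes "distribution_function F" "t > 1"
  shows "tail_quantile F t \<le> x \<longleftrightarrow> 1 - F x \<le> 1 / t"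
proof -
  have "0 < 1 - 1/t" "1 - 1/t < 1" using assms(2) by (auto simp: field_simps)
  then show ?thesis unfolding tail_quantile_def using gen_inv_le_iff[OF assms(1)] by auto
qed

lemma LIMSEQ_mult_one_minus_if_power_LIMSEQ_exp:
  fixes p :: "nat \<Rightarrow> real"
  assumes p01: "\<And>n. 0 \<le> p n" "\<And>n. p n \<le> 1" and lim: "(\<lambda>n. p n ^ n) \<longlonglongrightarrow> exp (- G)"
  shows "(\<lambda>n. real n * (1 - p n)) \<longlonglongrightarrow> G"
proof -
  have "eventually (\<lambda>n. p n ^ n > 0) sequentially"
    using lim by (rule order_tendstoD) simp
  then have pos: "eventually (\<lambda>n. p n > 0) sequentially"
    using eventually_gt_at_top[of 0]
    by eventually_elim (metis p01(1) less_eq_real_def zero_less_power_eq gr_implies_not0 power_0_left)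
  have "(\<lambda>n. ln (p n ^ n)) \<longlonglongrightarrow> - G"
    using tendsto_ln[OF lim] by simp
  then have n_ln: "(\<lambda>n. real n * ln (p n)) \<longlonglongrightarrow> - G"
    by (rule Lim_transform_eventually) (use pos in \<open>eventually_elim, simp add: ln_realpow\<close>)
  have "(\<lambda>n. (real n * ln (p n)) * inverse (real n)) \<longlonglongrightarrow> 0"
    using tendsto_mult[OF n_ln lim_inverse_n] by simp
  then have "(\<lambda>n. ln (p n)) \<longlonglongrightarrow> 0"
    by (rule Lim_transform_eventually) (use eventually_gt_at_top[of 0] in \<open>eventually_elim, simp\<close>)
  then have "(\<lambda>n. exp (ln (p n))) \<longlonglongrightarrow> 1" using tendsto_exp by fastforce
  then have "p \<longlonglongrightarrow> 1"
    by (rule Lim_transform_eventually) (use pos in \<open>eventually_elim, simp\<close>)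
  have upper: "(\<lambda>n. - (real n * ln (p n))) \<longlonglongrightarrow> G" using tendsto_minus[OF n_ln] by simp
  have lower: "(\<lambda>n. p n * (- (real n * ln (p n)))) \<longlonglongrightarrow> G"
    using tendsto_mult[OF \<open>p \<longlonglongrightarrow> 1\<close> upper] by simp
  \<comment> \<open>Sandwich from \<open>1 - 1/p \<le> ln p \<le> p - 1\<close>.\<close>
  show ?thesis
  proof (rule tendsto_sandwich[OF _ _ lower upper])
    show "\<forall>\<^sub>F n in sequentially. p n * - (real n * ln (p n)) \<le> real n * (1 - p n)"
      using pos
    proof eventually_elim
      case (elim n)
      have "ln (1 / p n) \<le> 1 / p n - 1" using elim by (intro ln_le_minus_one) simp
      then have "p n * (- ln (p n)) \<le> 1 - p n" using elim by (simp add: ln_div field_simps)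
      then have "real n * (p n * (- ln (p n))) \<le> real n * (1 - p n)" by (intro mult_left_mono) auto
      then show ?case by (simp add: algebra_simps)
    qed
    show "\<forall>\<^sub>F n in sequentially. real n * (1 - p n) \<le> - (real n * ln (p n))"
      using pos
    proof eventually_elim
      case (elim n)
      have "ln (p n) \<le> p n - 1" using elim by (intro ln_le_minus_one)
      then have "real n * (1 - p n) \<le> real n * (- ln (p n))" by (intro mult_left_mono) auto
      then show ?case by simp
    qed
  qed
qed

section \<open>The domain of attraction of \<open>G\<^sub>\<gamma>\<close>, \<open>\<gamma> > 0\<close>\<close>

lemma isCont_gev:
  assumes "\<gamma> \<noteq> 0" "1 + \<gamma> * x > 0"
  shows "isCont (gev \<gamma>) x"
proof -
  have "open {y::real. 0 < 1 + \<gamma> * y}"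
    by (intro open_Collect_less continuous_intros)
  then have "eventually (\<lambda>y. 0 < 1 + \<gamma> * y) (nhds x)"
    using eventually_nhds_in_open assms(2) by fastforce
  then have "eventually (\<lambda>y. gev \<gamma> y = exp (- ((1 + \<gamma> * y) powr (-1/\<gamma>)))) (nhds x)"
    by eventually_elim (use assms(1) in \<open>simp add: gev_def\<close>)
  moreover have "isCont (\<lambda>y. exp (- ((1 + \<gamma> * y) powr (-1/\<gamma>)))) x"
    using assms by (intro continuous_intros) auto
  ultimately show ?thesis using isCont_cong by metis
qed

lemma max_domain_of_attraction_tail_limit:
  assumes "distribution_function F" "\<gamma> > 0" "max_domain_of_attraction F \<gamma>"
  shows "\<exists>d e. (\<forall>n. e n > 0) \<and>
    (\<forall>z>0. (\<lambda>n. real n * (1 - F (d n + e n * z))) \<longlonglongrightarrow> z powr (-1/\<gamma>))"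
proof -
  obtain a b :: "nat \<Rightarrow> real" where a_pos: "\<forall>n. a n > 0" and
    conv: "\<forall>x. isCont (gev \<gamma>) x \<longrightarrow> (\<lambda>n. F (a n * x + b n) ^ n) \<longlonglongrightarrow> gev \<gamma> x"
    using assms(3) unfolding max_domain_of_attraction_def by blast
  \<comment> \<open>Substituting \<open>z = 1 + \<gamma> x\<close> turns \<open>G\<^sub>\<gamma>(x)\<close> into \<open>exp (- z powr (-1/\<gamma>))\<close>.\<close>
  define d where "d n = b n - a n / \<gamma>" for n
  define e where "e n = a n / \<gamma>" for n
  have "(\<lambda>n. real n * (1 - F (d n + e n * z))) \<longlonglongrightarrow> z powr (-1/\<gamma>)" if z: "z > 0" for z
  proof -
    define x where "x = (z - 1) / \<gamma>"
    have zx: "1 + \<gamma> * x = z" using assms(2) by (simp add: x_def field_simps)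
    have eq: "a n * x + b n = d n + e n * z" for n
      using assms(2) by (simp add: x_def d_def e_def field_simps)
    have "isCont (gev \<gamma>) x" using zx z assms(2) by (intro isCont_gev) auto
    then have "(\<lambda>n. F (a n * x + b n) ^ n) \<longlonglongrightarrow> gev \<gamma> x" using conv by blast
    moreover have "gev \<gamma> x = exp (- (z powr (-1/\<gamma>)))" using zx z assms(2) by (simp add: gev_def)
    ultimately have "(\<lambda>n. F (d n + e n * z) ^ n) \<longlonglongrightarrow> exp (- (z powr (-1/\<gamma>)))"
      unfolding eq by simp
    then show ?thesis using distribution_function_bounds[OF assms(1)]
      by (intro LIMSEQ_mult_one_minus_if_power_LIMSEQ_exp) auto
  qed
  moreover have "\<forall>n. e n > 0" using a_pos assms(2) by (simp add: e_def)
  ultimately show ?thesis by blast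
qed

locale tail_scaling =
  fixes V :: "real \<Rightarrow> real" and d e :: "nat \<Rightarrow> real" and \<gamma> :: real
  assumes V_antimono: "\<And>x y. x \<le> y \<Longrightarrow> V y \<le> V x"
    and scale_pos: "\<And>n. e n > 0" and gamma_pos: "\<gamma> > 0"
    and scaled_tail: "\<And>z. z > 0 \<Longrightarrow> (\<lambda>n. real n * V (d n + e n * z)) \<longlonglongrightarrow> z powr (-1/\<gamma>)"
begin

lemma less_if_V_less: "V y < V x \<Longrightarrow> x < y"
  using V_antimono by (meson not_le)

lemma scaled_tail_along:
  assumes "filterlim N sequentially F" "z > 0"
  shows "((\<lambda>i. real (N i) * V (d (N i) + e (N i) * z)) \<longlongrightarrow> z powr (-1/\<gamma>)) F"
  using filterlim_compose[OF scaled_tail[OF assms(2)] assms(1)] .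

text \<open>Since \<open>z powr (-1/\<gamma>)\<close> is strictly decreasing and \<open>V\<close> antitone, the convergence
  \<open>n V(d\<^sub>n + e\<^sub>n z) \<rightarrow> z powr (-1/\<gamma>)\<close> transfers to arbitrary points and index sequences.\<close>

lemma scaled_tendsto_if_tail_tendsto:
  assumes N: "filterlim N sequentially F" and z0: "z0 > 0"
    and lim: "((\<lambda>i. real (N i) * V (x i)) \<longlongrightarrow> z0 powr (-1/\<gamma>)) F"
  shows "((\<lambda>i. (x i - d (N i)) / e (N i)) \<longlongrightarrow> z0) F"
proof (rule order_tendstoI)
  fix a assume a: "a > z0"
  let ?m = "(a powr (-1/\<gamma>) + z0 powr (-1/\<gamma>)) / 2"
  have lt: "a powr (-1/\<gamma>) < z0 powr (-1/\<gamma>)"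
    using gamma_pos z0 a by (intro powr_less_mono2_neg) auto
  have "eventually (\<lambda>i. real (N i) * V (d (N i) + e (N i) * a) < ?m) F"
    using scaled_tail_along[OF N, of a] a z0 lt by (intro order_tendstoD) auto
  moreover have "eventually (\<lambda>i. ?m < real (N i) * V (x i)) F"
    using lim lt by (intro order_tendstoD) auto
  ultimately show "eventually (\<lambda>i. (x i - d (N i)) / e (N i) < a) F"
  proof eventually_elim
    case (elim i)
    then have "real (N i) * V (d (N i) + e (N i) * a) < real (N i) * V (x i)" by linarith
    then have "V (d (N i) + e (N i) * a) < V (x i)" by (rule mult_left_less_imp_less) simp
    then have "x i < d (N i) + e (N i) * a" by (rule less_if_V_less)
    then show ?case using scale_pos[of "N i"] by (simp add: field_simps)
  qed
next
  fix a0 assume a0: "a0 < z0"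
  define a where "a = max a0 (z0/2)"
  have a: "0 < a" "a < z0" "a0 \<le> a" using a0 z0 by (auto simp: a_def)
  let ?m = "(a powr (-1/\<gamma>) + z0 powr (-1/\<gamma>)) / 2"
  have lt: "z0 powr (-1/\<gamma>) < a powr (-1/\<gamma>)"
    using gamma_pos a by (intro powr_less_mono2_neg) auto
  have "eventually (\<lambda>i. ?m < real (N i) * V (d (N i) + e (N i) * a)) F"
    using scaled_tail_along[OF N, of a] a lt by (intro order_tendstoD) auto
  moreover have "eventually (\<lambda>i. real (N i) * V (x i) < ?m) F"
    using lim lt by (intro order_tendstoD) auto
  ultimately show "eventually (\<lambda>i. a0 < (x i - d (N i)) / e (N i)) F"
  proof eventually_elim
    case (elim i)
    then have "real (N i) * V (x i) < real (N i) * V (d (N i) + e (N i) * a)" by linarith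
    then have "V (x i) < V (d (N i) + e (N i) * a)" by (rule mult_left_less_imp_less) simp
    then have "d (N i) + e (N i) * a < x i" by (rule less_if_V_less)
    then have "a < (x i - d (N i)) / e (N i)" using scale_pos[of "N i"] by (simp add: field_simps)
    then show ?case using a by linarith
  qed
qed

lemma tail_tendsto_if_scaled_tendsto:
  assumes N: "filterlim N sequentially F" and z0: "z0 > 0"
    and lim: "((\<lambda>i. (x i - d (N i)) / e (N i)) \<longlongrightarrow> z0) F"
  shows "((\<lambda>i. real (N i) * V (x i)) \<longlongrightarrow> z0 powr (-1/\<gamma>)) F"
proof (rule order_tendstoI)
  have cont: "isCont (\<lambda>y. y powr (-1/\<gamma>)) z0"
    using z0 by (auto intro!: continuous_intros)
  fix b assume b: "b > z0 powr (-1/\<gamma>)"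
  have "eventually (\<lambda>y. y powr (-1/\<gamma>) < b) (at_left z0)"
    using cont b by (intro order_tendstoD) (auto simp: isCont_def filterlim_at_split)
  then obtain b' where b': "b' < z0" "\<And>y. b' < y \<Longrightarrow> y < z0 \<Longrightarrow> y powr (-1/\<gamma>) < b"
    unfolding eventually_at_left_field by blast
  define a where "a = max ((b' + z0)/2) (z0/2)"
  have a: "0 < a" "a < z0" "b' < a" using b' z0 unfolding a_def by (auto simp: max_def)
  have "eventually (\<lambda>i. real (N i) * V (d (N i) + e (N i) * a) < b) F"
    using scaled_tail_along[OF N, of a] a b' by (intro order_tendstoD) auto
  moreover have "eventually (\<lambda>i. a < (x i - d (N i)) / e (N i)) F"
    using lim a by (intro order_tendstoD) auto
  ultimately show "eventually (\<lambda>i. real (N i) * V (x i) < b) F"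
  proof eventually_elim
    case (elim i)
    then have "d (N i) + e (N i) * a < x i" using scale_pos[of "N i"] by (simp add: field_simps)
    then have "real (N i) * V (x i) \<le> real (N i) * V (d (N i) + e (N i) * a)"
      by (intro mult_left_mono V_antimono) auto
    then show ?case using elim by linarith
  qed
next
  have cont: "isCont (\<lambda>y. y powr (-1/\<gamma>)) z0"
    using z0 by (auto intro!: continuous_intros)
  fix b assume b: "b < z0 powr (-1/\<gamma>)"
  have "eventually (\<lambda>y. b < y powr (-1/\<gamma>)) (at_right z0)"
    using cont b by (intro order_tendstoD) (auto simp: isCont_def filterlim_at_split)
  then obtain b' where b': "b' > z0" "\<And>y. z0 < y \<Longrightarrow> y < b' \<Longrightarrow> b < y powr (-1/\<gamma>)"
    unfolding eventually_at_right_field by blast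
  define a where "a = (b' + z0)/2"
  have a: "z0 < a" "a < b'" using b' by (auto simp: a_def)
  have "eventually (\<lambda>i. b < real (N i) * V (d (N i) + e (N i) * a)) F"
    using scaled_tail_along[OF N, of a] a b' z0 by (intro order_tendstoD) auto
  moreover have "eventually (\<lambda>i. (x i - d (N i)) / e (N i) < a) F"
    using lim a by (intro order_tendstoD) auto
  ultimately show "eventually (\<lambda>i. b < real (N i) * V (x i)) F"
  proof eventually_elim
    case (elim i)
    then have "x i < d (N i) + e (N i) * a" using scale_pos[of "N i"] by (simp add: field_simps)
    then have "real (N i) * V (d (N i) + e (N i) * a) \<le> real (N i) * V (x i)"
      by (intro mult_left_mono V_antimono) auto
    then show ?case using elim by linarith
  qed
qed

end

lemma filterlim_div2_sequentially: "filterlim (\<lambda>n::nat. n div 2) sequentially sequentially"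
  unfolding filterlim_at_top eventually_sequentially
  by (metis div_le_mono nonzero_mult_div_cancel_right zero_neq_numeral)

lemma LIMSEQ_div2_over_n: "(\<lambda>n. real (n div 2) / real n) \<longlonglongrightarrow> 1/2"
proof (rule tendsto_sandwich[of "\<lambda>n. 1/2 - 1 / real n" _ _ "\<lambda>n. 1/2"])
  show "\<forall>\<^sub>F n in sequentially. 1/2 - 1 / real n \<le> real (n div 2) / real n"
    using eventually_gt_at_top[of 0]
  proof eventually_elim
    case (elim n)
    have "real n \<le> 2 + 2 * real (n div 2)" by linarith
    then have "real n * real n \<le> real n * (2 + 2 * real (n div 2))" by (intro mult_left_mono) auto
    then show ?case using elim by (simp add: field_simps)
  qed
  show "\<forall>\<^sub>F n in sequentially. real (n div 2) / real n \<le> 1/2"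
  proof (rule always_eventually, rule allI)
    fix n :: nat
    have "2 * real (n div 2) \<le> real n" by linarith
    then show "real (n div 2) / real n \<le> 1/2" by (cases "n = 0") (simp_all add: field_simps)
  qed
  show "(\<lambda>n. 1/2 - 1 / real n) \<longlonglongrightarrow> 1/2"
    using tendsto_diff[OF tendsto_const lim_inverse_n', of "1/2"] by simp
qed simp

lemma halving_recursion_bounded:
  fixes f :: "nat \<Rightarrow> real"
  assumes rec: "\<And>n. n \<ge> N0 \<Longrightarrow> f n \<le> \<beta> * f (n div 2) + C"
    and \<beta>: "0 \<le> \<beta>" "\<beta> < 1"
  shows "\<exists>B. \<forall>n. f n \<le> B"
proof -
  define B where "B = max (Max (f ` {..N0})) (C / (1 - \<beta>))"
  have "f n \<le> B" for n
  proof (induction n rule: less_induct)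
    case (less n)
    show ?case
    proof (cases "n \<le> N0")
      case True
      then have "f n \<le> Max (f ` {..N0})" by (intro Max_ge) auto
      then show ?thesis unfolding B_def by linarith
    next
      case False
      then have "f (n div 2) \<le> B" by (intro less.IH) auto
      then have "\<beta> * f (n div 2) \<le> \<beta> * B" using \<beta> by (intro mult_left_mono) auto
      moreover have "C / (1 - \<beta>) \<le> B" unfolding B_def by linarith
      then have "C \<le> (1 - \<beta>) * B" using \<beta> by (simp add: field_simps)
      ultimately show ?thesis using rec[of n] False by (simp add: algebra_simps)
    qed
  qed
  then show ?thesis by blast
qed

lemma halving_recursion_LIMSEQ_zero:
  fixes f :: "nat \<Rightarrow> real"
  assumes f_nonneg: "\<And>n. 0 \<le> f n" and f_bounded: "\<And>n. f n \<le> B"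
    and \<beta>: "0 \<le> \<beta>" "\<beta> < 1"
    and rec: "\<And>\<epsilon>. \<epsilon> > 0 \<Longrightarrow> eventually (\<lambda>n. f n \<le> \<beta> * f (n div 2) + \<epsilon>) sequentially"
  shows "f \<longlonglongrightarrow> 0"
proof (rule order_tendstoI)
  fix a :: real assume "a < 0"
  then show "eventually (\<lambda>n. a < f n) sequentially"
    using f_nonneg by (auto intro: always_eventually less_le_trans)
next
  fix a :: real assume a: "a > 0"
  define \<epsilon> where "\<epsilon> = a * (1 - \<beta>) / 4"
  have \<epsilon>: "\<epsilon> > 0" using a \<beta> by (simp add: \<epsilon>_def)
  have iterate: "eventually (\<lambda>n. f n \<le> \<beta> ^ k * B + \<epsilon> / (1 - \<beta>)) sequentially" for k
  proof (induction k)
    case 0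
    show ?case using f_bounded \<epsilon> \<beta> by (auto intro!: always_eventually add_increasing2)
  next
    case (Suc k)
    have "eventually (\<lambda>n. f (n div 2) \<le> \<beta> ^ k * B + \<epsilon> / (1 - \<beta>)) sequentially"
      using filterlim_iff[THEN iffD1, OF filterlim_div2_sequentially] Suc by blast
    with rec[OF \<epsilon>] show ?case
    proof eventually_elim
      case (elim n)
      have "\<beta> * f (n div 2) \<le> \<beta> * (\<beta> ^ k * B + \<epsilon> / (1 - \<beta>))"
        using elim \<beta> by (intro mult_left_mono) auto
      also have "\<dots> + \<epsilon> = \<beta> ^ Suc k * B + \<epsilon> / (1 - \<beta>)"
        using \<beta> by (simp add: field_simps)
      finally show ?case using elim by linarith
    qed
  qed
  have "(\<lambda>k. \<beta> ^ k * B) \<longlonglongrightarrow> 0"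
    using \<beta> tendsto_mult[OF LIMSEQ_power_zero tendsto_const, of \<beta> B] by auto
  then have "eventually (\<lambda>k. \<beta> ^ k * B < \<epsilon>) sequentially" using \<epsilon> by (rule order_tendstoD)
  then obtain k where k: "\<beta> ^ k * B < \<epsilon>" by (auto simp: eventually_sequentially)
  have "\<epsilon> / (1 - \<beta>) = a / 4" "\<epsilon> \<le> a / 4"
    using \<beta> a by (simp_all add: \<epsilon>_def field_simps)
  then have "\<epsilon> + \<epsilon> / (1 - \<beta>) < a" using a by linarith
  then show "eventually (\<lambda>n. f n < a) sequentially"
    using iterate[of k] k by (auto elim!: eventually_mono)
qed

lemma floor_inverse_index:
  fixes V :: "'a \<Rightarrow> real"
  assumes pos: "\<And>x. V x > 0" and lim: "(V \<longlongrightarrow> 0) F"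
  shows "filterlim (\<lambda>x. nat \<lfloor>inverse (V x)\<rfloor>) sequentially F"
    and "((\<lambda>x. real (nat \<lfloor>inverse (V x)\<rfloor>) * V x) \<longlongrightarrow> 1) F"
proof -
  have "\<forall>x. V x \<in> {0<..} \<and> V x \<noteq> 0" using pos by (metis greaterThan_iff less_irrefl)
  then have "filterlim V (at_right 0) F"
    unfolding filterlim_at using lim by (auto intro: always_eventually)
  then show "filterlim (\<lambda>x. nat \<lfloor>inverse (V x)\<rfloor>) sequentially F"
    by (rule filterlim_compose[OF filterlim_nat_sequentially
          filterlim_compose[OF filterlim_floor_sequentially
            filterlim_compose[OF filterlim_inverse_at_top_right]]])
  show "((\<lambda>x. real (nat \<lfloor>inverse (V x)\<rfloor>) * V x) \<longlongrightarrow> 1) F"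
  proof (rule tendsto_sandwich[of "\<lambda>x. 1 - V x" _ _ "\<lambda>x. 1"])
    have floor: "inverse (V x) - 1 < real (nat \<lfloor>inverse (V x)\<rfloor>)"
      "real (nat \<lfloor>inverse (V x)\<rfloor>) \<le> inverse (V x)" for x
      using pos[of x] by (simp_all add: of_nat_nat)
    show "\<forall>\<^sub>F x in F. 1 - V x \<le> real (nat \<lfloor>inverse (V x)\<rfloor>) * V x"
    proof (rule always_eventually, rule allI)
      fix x
      have "(inverse (V x) - 1) * V x \<le> real (nat \<lfloor>inverse (V x)\<rfloor>) * V x"
        using floor(1)[of x] pos[of x] by (intro mult_right_mono) auto
      moreover have "(inverse (V x) - 1) * V x = 1 - V x" using pos[of x] by (simp add: field_simps)
      ultimately show "1 - V x \<le> real (nat \<lfloor>inverse (V x)\<rfloor>) * V x" by simp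
    qed
    show "\<forall>\<^sub>F x in F. real (nat \<lfloor>inverse (V x)\<rfloor>) * V x \<le> 1"
    proof (rule always_eventually, rule allI)
      fix x
      have "real (nat \<lfloor>inverse (V x)\<rfloor>) * V x \<le> inverse (V x) * V x"
        using floor(2)[of x] pos[of x] by (intro mult_right_mono) auto
      then show "real (nat \<lfloor>inverse (V x)\<rfloor>) * V x \<le> 1" using pos[of x] by simp
    qed
    show "((\<lambda>x. 1 - V x) \<longlongrightarrow> 1) F" using tendsto_diff[OF tendsto_const lim, of 1] by simp
  qed simp
qed

locale vanishing_tail_scaling = tail_scaling +
  assumes V_nonneg: "\<And>x. V x \<ge> 0" and V_tendsto_zero: "(V \<longlongrightarrow> 0) at_top"
    and V_nonzero: "\<exists>x. V x > 0"
begin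

lemma scaled_tail_halving:
  assumes z: "z > 0"
  shows "(\<lambda>n. (d n + e n * z - d (n div 2)) / e (n div 2)) \<longlonglongrightarrow> 2 powr \<gamma> * z"
proof (rule scaled_tendsto_if_tail_tendsto[OF filterlim_div2_sequentially])
  show "0 < 2 powr \<gamma> * z" using z by simp
  have "(\<lambda>n. (real (n div 2) / real n) * (real n * V (d n + e n * z))) \<longlonglongrightarrow> 1/2 * z powr (-1/\<gamma>)"
    by (intro tendsto_mult LIMSEQ_div2_over_n scaled_tail z)
  moreover have "1/2 * z powr (-1/\<gamma>) = (2 powr \<gamma> * z) powr (-1/\<gamma>)"
    using gamma_pos z by (simp add: powr_mult powr_powr powr_minus_divide)
  ultimately show "(\<lambda>n. real (n div 2) * V (d n + e n * z)) \<longlonglongrightarrow> (2 powr \<gamma> * z) powr (-1/\<gamma>)"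
    by (auto elim!: Lim_transform_eventually intro: eventually_mono[OF eventually_gt_at_top[of 0]])
qed

lemma LIMSEQ_scale_halving_ratio: "(\<lambda>n. e n / e (n div 2)) \<longlonglongrightarrow> 2 powr \<gamma>"
proof -
  have "(\<lambda>n. (d n + e n * 2 - d (n div 2)) / e (n div 2) - (d n + e n * 1 - d (n div 2)) / e (n div 2))
     \<longlonglongrightarrow> 2 powr \<gamma> * 2 - 2 powr \<gamma> * 1"
    by (intro tendsto_diff scaled_tail_halving) auto
  moreover have "(d n + e n * 2 - d (n div 2)) / e (n div 2) - (d n + e n * 1 - d (n div 2)) / e (n div 2)
     = e n / e (n div 2)" for n
    using scale_pos[of "n div 2"] by (simp add: field_simps)
  ultimately show ?thesis by simp
qed

lemma LIMSEQ_location_halving_difference: "(\<lambda>n. (d n - d (n div 2)) / e (n div 2)) \<longlonglongrightarrow> 0"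
proof -
  have "(\<lambda>n. (d n + e n * 1 - d (n div 2)) / e (n div 2) - e n / e (n div 2))
     \<longlonglongrightarrow> 2 powr \<gamma> * 1 - 2 powr \<gamma>"
    by (intro tendsto_diff scaled_tail_halving LIMSEQ_scale_halving_ratio) auto
  moreover have "(d n + e n * 1 - d (n div 2)) / e (n div 2) - e n / e (n div 2)
     = (d n - d (n div 2)) / e (n div 2)" for n
    using scale_pos[of "n div 2"] by (simp add: field_simps)
  ultimately show ?thesis by simp
qed

lemma scale_unbounded: "\<exists>n\<ge>N. B \<le> e n"
proof -
  define \<beta> where "\<beta> = (1 + 2 powr \<gamma>) / 2"
  have "2 powr \<gamma> > 1" using gamma_pos by simp
  then have \<beta>: "\<beta> > 1" "\<beta> < 2 powr \<gamma>" by (auto simp: \<beta>_def)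
  obtain N' where N': "\<And>n. n \<ge> N' \<Longrightarrow> \<beta> < e n / e (n div 2)"
    using order_tendstoD(1)[OF LIMSEQ_scale_halving_ratio \<beta>(2)]
    by (auto simp: eventually_sequentially)
  define K where "K = Suc (max N N')"
  have K_le: "max N N' \<le> 2 ^ j * K" for j
  proof -
    have "max N N' < K" by (simp add: K_def)
    moreover have "K \<le> 2 ^ j * K" by simp
    ultimately show ?thesis by linarith
  qed
  have grow: "\<beta> ^ j * e K \<le> e (2 ^ j * K)" for j
  proof (induction j)
    case (Suc j)
    have "\<beta> < e (2 ^ Suc j * K) / e (2 ^ j * K)"
      using N'[of "2 ^ Suc j * K"] K_le[of "Suc j"] by simp
    then have "\<beta> * e (2 ^ j * K) \<le> e (2 ^ Suc j * K)"
      using scale_pos[of "2 ^ j * K"] by (simp add: field_simps)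
    moreover have "\<beta> * (\<beta> ^ j * e K) \<le> \<beta> * e (2 ^ j * K)"
      using Suc \<beta> by (intro mult_left_mono) auto
    ultimately show ?case by simp
  qed simp
  obtain j where "B / e K < \<beta> ^ j" using real_arch_pow[OF \<beta>(1)] by blast
  then have "B \<le> e (2 ^ j * K)"
    using grow[of j] scale_pos[of K] by (simp add: field_simps)
  then show ?thesis using K_le[of j] by auto
qed

text \<open>The right endpoint is infinite: were \<open>V\<close> to vanish at some \<open>x\<close>, the points
  \<open>d\<^sub>n + e\<^sub>n\<close> and \<open>d\<^sub>n + 2 e\<^sub>n\<close> would eventually lie between a point where \<open>V\<close> is
  positive and \<open>x\<close>, contradicting the geometric growth of the scales \<open>e\<^sub>n\<close>.\<close>

lemma V_pos: "V x > 0"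
proof (rule ccontr)
  assume "\<not> V x > 0"
  then have Vx: "V x = 0" using V_nonneg[of x] by linarith
  obtain P where P: "V P > 0" using V_nonzero by blast
  have "(\<lambda>n. (real n * V (d n + e n * 1)) * inverse (real n)) \<longlonglongrightarrow> 0"
    using tendsto_mult[OF scaled_tail lim_inverse_n, of 1] by simp
  then have "(\<lambda>n. V (d n + e n * 1)) \<longlonglongrightarrow> 0"
    by (rule Lim_transform_eventually) (use eventually_gt_at_top[of 0] in \<open>eventually_elim, simp\<close>)
  then have "eventually (\<lambda>n. V (d n + e n * 1) < V P) sequentially"
    using P by (intro order_tendstoD) auto
  moreover have "eventually (\<lambda>n. 0 < real n * V (d n + e n * 2)) sequentially"
    using order_tendstoD(1)[OF scaled_tail[of 2]] by simp
  ultimately have "eventually (\<lambda>n. e n < x - P) sequentially"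
  proof eventually_elim
    case (elim n)
    have "P < d n + e n * 1" using less_if_V_less[OF elim(1)] .
    moreover have "V (d n + e n * 2) > 0" using elim(2) by (simp add: zero_less_mult_iff)
    then have "d n + e n * 2 < x" using Vx less_if_V_less by auto
    ultimately show ?case by simp
  qed
  then obtain N where "\<And>n. n \<ge> N \<Longrightarrow> e n < x - P" by (auto simp: eventually_sequentially)
  with scale_unbounded[of N "x - P"] show False by force
qed

text \<open>\<open>d\<^sub>n/e\<^sub>n \<approx> (e\<^sub>n\<^sub>/\<^sub>2/e\<^sub>n) (d\<^sub>n\<^sub>/\<^sub>2/e\<^sub>n\<^sub>/\<^sub>2) + o(1)\<close> with \<open>e\<^sub>n\<^sub>/\<^sub>2/e\<^sub>n \<rightarrow> 2 powr (-\<gamma>) < 1\<close>,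
  so the positive part of \<open>d\<^sub>n/e\<^sub>n\<close> satisfies a contracting halving recursion.\<close>

lemma location_over_scale_halving_recursion:
  assumes \<beta>: "2 powr (-\<gamma>) < \<beta>" "\<beta> \<le> 1" and \<epsilon>: "\<epsilon> > 0"
  shows "eventually (\<lambda>n. max (d n / e n) 0 \<le> \<beta> * max (d (n div 2) / e (n div 2)) 0 + \<epsilon>) sequentially"
proof -
  have "(\<lambda>n. inverse (e n / e (n div 2))) \<longlonglongrightarrow> inverse (2 powr \<gamma>)"
    by (intro tendsto_inverse LIMSEQ_scale_halving_ratio) simp
  then have "(\<lambda>n. e (n div 2) / e n) \<longlonglongrightarrow> 2 powr (-\<gamma>)" by (simp add: powr_minus)
  then have "eventually (\<lambda>n. e (n div 2) / e n < \<beta>) sequentially"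
    using \<beta>(1) by (rule order_tendstoD)
  moreover have "eventually (\<lambda>n. (d n - d (n div 2)) / e (n div 2) < \<epsilon>) sequentially"
    using LIMSEQ_location_halving_difference \<epsilon> by (rule order_tendstoD)
  ultimately show ?thesis
  proof eventually_elim
    case (elim n)
    define m where "m = n div 2"
    define A where "A = (d n - d m) / e m"
    define k where "k = e m / e n"
    have k_pos: "k > 0" using scale_pos[of m] scale_pos[of n] by (simp add: k_def)
    have split: "d n / e n = (A + d m / e m) * k"
      using scale_pos[of m] scale_pos[of n] by (simp add: A_def k_def field_simps)
    have A: "A < \<epsilon>" and k: "k < \<beta>" using elim by (simp_all add: A_def k_def m_def)
    have "0 < 2 powr (-\<gamma>)" by simp
    then have \<beta>_pos: "0 < \<beta>" using \<beta>(1) by linarith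
    show ?case
    proof (cases "A + d m / e m \<le> 0")
      case True
      then have "d n / e n \<le> 0" unfolding split using k_pos by (simp add: mult_nonpos_nonneg)
      then show ?thesis using \<beta>_pos \<epsilon> unfolding m_def by simp
    next
      case False
      have "d n / e n \<le> (\<epsilon> + max (d m / e m) 0) * \<beta>" unfolding split
        using False A k k_pos by (intro mult_mono) auto
      also have "\<dots> \<le> \<beta> * max (d m / e m) 0 + \<epsilon>"
        using \<beta>(2) \<epsilon> by (simp add: algebra_simps mult_left_le)
      finally show ?thesis using \<beta>_pos \<epsilon> unfolding m_def by simp
    qed
  qed
qed

lemma LIMSEQ_location_over_scale: "(\<lambda>n. d n / e n) \<longlonglongrightarrow> 0"
proof (rule order_tendstoI)
  fix a :: real assume a: "a < 0"
  have "(\<lambda>n. (real n * V (d n + e n * (-a))) * inverse (real n)) \<longlonglongrightarrow> 0"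
    using tendsto_mult[OF scaled_tail lim_inverse_n, of "-a"] a by simp
  then have "(\<lambda>n. V (d n + e n * (-a))) \<longlonglongrightarrow> 0"
    by (rule Lim_transform_eventually) (use eventually_gt_at_top[of 0] in \<open>eventually_elim, simp\<close>)
  then have "eventually (\<lambda>n. V (d n + e n * (-a)) < V 0) sequentially"
    using V_pos[of 0] by (rule order_tendstoD)
  then show "eventually (\<lambda>n. a < d n / e n) sequentially"
  proof eventually_elim
    case (elim n)
    then have "0 < d n + e n * (-a)" by (rule less_if_V_less)
    then show ?case using scale_pos[of n] by (simp add: field_simps)
  qed
next
  define f where "f = (\<lambda>n. max (d n / e n) 0)"
  define \<beta> :: real where "\<beta> = (1 + 2 powr (-\<gamma>)) / 2"
  have "2 powr (-\<gamma>) < 1" using gamma_pos by (simp add: powr_minus inverse_less_1_iff)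
  then have \<beta>: "0 \<le> \<beta>" "\<beta> < 1" "2 powr (-\<gamma>) < \<beta>" by (auto simp: \<beta>_def)
  have rec: "eventually (\<lambda>n. f n \<le> \<beta> * f (n div 2) + \<epsilon>) sequentially" if "\<epsilon> > 0" for \<epsilon>
    using \<beta>(3) less_imp_le[OF \<beta>(2)] that unfolding f_def by (rule location_over_scale_halving_recursion)
  obtain N0 where "\<And>n. n \<ge> N0 \<Longrightarrow> f n \<le> \<beta> * f (n div 2) + 1"
    using rec[of 1] by (auto simp: eventually_sequentially)
  then obtain B where "\<And>n. f n \<le> B" using halving_recursion_bounded \<beta> by metis
  then have "f \<longlonglongrightarrow> 0"
    by (intro halving_recursion_LIMSEQ_zero[OF _ _ \<beta>(1,2) rec]) (auto simp: f_def)
  fix a :: real assume "a > 0"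
  then have "eventually (\<lambda>n. f n < a) sequentially" using \<open>f \<longlonglongrightarrow> 0\<close> by (intro order_tendstoD)
  then show "eventually (\<lambda>n. d n / e n < a) sequentially"
    by eventually_elim (simp add: f_def)
qed

text \<open>Regular variation of \<open>V\<close> follows by evaluating both \<open>V (c y)\<close> and \<open>V y\<close> along the index
  \<open>N y = \<lfloor>1 / V y\<rfloor>\<close>, for which \<open>(y - d\<^sub>N)/e\<^sub>N \<rightarrow> 1\<close> and hence \<open>(c y - d\<^sub>N)/e\<^sub>N \<rightarrow> c\<close>,
  because \<open>d\<^sub>N/e\<^sub>N \<rightarrow> 0\<close>.\<close>

lemma regularly_varying:
  assumes c: "c > 0"
  shows "((\<lambda>y. V (c * y) / V y) \<longlongrightarrow> c powr (-1/\<gamma>)) at_top"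
proof -
  define N where "N y = nat \<lfloor>inverse (V y)\<rfloor>" for y
  have N: "filterlim N sequentially at_top" and NV: "((\<lambda>y. real (N y) * V y) \<longlongrightarrow> 1) at_top"
    unfolding N_def using floor_inverse_index[OF V_pos V_tendsto_zero] by auto
  have "((\<lambda>y. (y - d (N y)) / e (N y)) \<longlongrightarrow> 1) at_top"
    by (rule scaled_tendsto_if_tail_tendsto[OF N]) (use NV in simp_all)
  moreover have "((\<lambda>y. d (N y) / e (N y)) \<longlongrightarrow> 0) at_top"
    by (rule filterlim_compose[OF LIMSEQ_location_over_scale N])
  ultimately have "((\<lambda>y. c * ((y - d (N y)) / e (N y)) + (c - 1) * (d (N y) / e (N y)))
      \<longlongrightarrow> c * 1 + (c - 1) * 0) at_top"
    by (intro tendsto_intros)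
  moreover have "c * ((y - d (N y)) / e (N y)) + (c - 1) * (d (N y) / e (N y)) = (c * y - d (N y)) / e (N y)" for y
    using scale_pos[of "N y"] by (simp add: field_simps)
  ultimately have "((\<lambda>y. real (N y) * V (c * y)) \<longlongrightarrow> c powr (-1/\<gamma>)) at_top"
    by (intro tail_tendsto_if_scaled_tendsto[OF N c]) simp
  from tendsto_divide[OF this NV]
  have "((\<lambda>y. (real (N y) * V (c * y)) / (real (N y) * V y)) \<longlongrightarrow> c powr (-1/\<gamma>)) at_top" by simp
  moreover have "eventually (\<lambda>y. N y \<ge> 1) at_top" using N by (simp add: filterlim_at_top)
  then have "eventually (\<lambda>y. (real (N y) * V (c * y)) / (real (N y) * V y) = V (c * y) / V y) at_top"
    by eventually_elim simp
  ultimately show ?thesis by (rule Lim_transform_eventually)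
qed

end

lemma max_domain_of_attraction_regularly_varying:
  assumes F: "distribution_function F" and \<gamma>: "\<gamma> > 0" and "max_domain_of_attraction F \<gamma>"
  shows "F x < 1"
    and "c > 0 \<Longrightarrow> ((\<lambda>y. (1 - F (c * y)) / (1 - F y)) \<longlongrightarrow> c powr (-1/\<gamma>)) at_top"
proof -
  have mono: "mono F" and lim_bot: "(F \<longlongrightarrow> 0) at_bot" and lim_top: "(F \<longlongrightarrow> 1) at_top"
    using F by (auto simp: distribution_function_def)
  obtain d e where e_pos: "\<forall>n. e n > 0"
    and tail: "\<forall>z>0. (\<lambda>n. real n * (1 - F (d n + e n * z))) \<longlonglongrightarrow> z powr (-1/\<gamma>)"
    using max_domain_of_attraction_tail_limit[OF assms] by blast
  interpret vanishing_tail_scaling "\<lambda>x. 1 - F x" d e \<gamma>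
  proof unfold_locales
    show "1 - F y \<le> 1 - F x" if "x \<le> y" for x y using mono that by (simp add: mono_def)
    show "0 \<le> 1 - F x" for x using distribution_function_bounds[OF F] by simp
    show "((\<lambda>x. 1 - F x) \<longlongrightarrow> 0) at_top" using tendsto_diff[OF tendsto_const lim_top, of 1] by simp
    have "eventually (\<lambda>x. F x < 1) at_bot" using lim_bot by (rule order_tendstoD) simp
    then show "\<exists>x. 0 < 1 - F x" by (auto simp: eventually_at_bot_linorder)
  qed (use e_pos tail \<gamma> in auto)
  show "F x < 1" using V_pos[of x] by simp
  show "c > 0 \<Longrightarrow> ((\<lambda>y. (1 - F (c * y)) / (1 - F y)) \<longlongrightarrow> c powr (-1/\<gamma>)) at_top"
    by (rule regularly_varying)
qed

section \<open>Comparing tails and quantiles\<close>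

lemma ratio_tendstoI:
  fixes f g :: "'a \<Rightarrow> real"
  assumes L: "L > 0" and g_pos: "\<forall>\<^sub>F x in F. g x > 0"
    and upper: "\<And>\<theta>. \<theta> > L \<Longrightarrow> \<forall>\<^sub>F x in F. f x \<le> \<theta> * g x"
    and lower: "\<And>\<theta>. 0 < \<theta> \<Longrightarrow> \<theta> < L \<Longrightarrow> \<forall>\<^sub>F x in F. \<theta> * g x < f x"
  shows "((\<lambda>x. f x / g x) \<longlongrightarrow> L) F"
proof (rule order_tendstoI)
  fix a assume a: "a > L"
  have "\<forall>\<^sub>F x in F. f x \<le> ((L + a) / 2) * g x" using a by (intro upper) simp
  with g_pos show "\<forall>\<^sub>F x in F. f x / g x < a"
  proof eventually_elim
    case (elim x)
    then have "f x / g x \<le> (L + a) / 2" by (simp add: pos_divide_le_eq)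
    also have "\<dots> < a" using a by (simp add: field_simps)
    finally show ?case .
  qed
next
  fix a assume a: "a < L"
  have "\<forall>\<^sub>F x in F. max a (L/2) * g x < f x" using a L by (intro lower) auto
  with g_pos show "\<forall>\<^sub>F x in F. a < f x / g x"
  proof eventually_elim
    case (elim x)
    then have "max a (L/2) < f x / g x" by (metis pos_less_divide_eq)
    then show ?case by linarith
  qed
qed

lemma filterlim_const_mult_at_top: "c > 0 \<Longrightarrow> filterlim (\<lambda>y::real. c * y) at_top at_top"
  by (rule filterlim_tendsto_pos_mult_at_top[OF tendsto_const _ filterlim_ident])

text \<open>\<open>V\<close>, \<open>W\<close> play the roles of \<open>1 - F\<^sub>0\<close>, \<open>1 - F\<^sub>s\<close>; the quantile functions \<open>U\<^sub>0\<close>, \<open>U\<^sub>s\<close>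
  enter only through their Galois connections with the tails.\<close>

locale quantile_comparison =
  fixes V W U0 Us :: "real \<Rightarrow> real" and \<gamma> :: real
  assumes gamma_pos: "\<gamma> > 0"
    and U0_le_iff: "\<And>t x. t > 1 \<Longrightarrow> U0 t \<le> x \<longleftrightarrow> V x \<le> 1 / t"
    and Us_le_iff: "\<And>t x. t > 1 \<Longrightarrow> Us t \<le> x \<longleftrightarrow> W x \<le> 1 / t"
    and V_pos: "\<And>x. V x > 0" and V_tendsto_zero: "(V \<longlongrightarrow> 0) at_top"
    and V_regularly_varying: "\<And>c. c > 0 \<Longrightarrow> ((\<lambda>y. V (c * y) / V y) \<longlongrightarrow> c powr (-1/\<gamma>)) at_top"
begin

lemma filterlim_U0_at_top: "filterlim U0 at_top at_top"
  unfolding filterlim_at_top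
proof
  fix Z
  have "eventually (\<lambda>t. t > max 1 (1 / V Z)) at_top" by (rule eventually_gt_at_top)
  then show "eventually (\<lambda>t. Z \<le> U0 t) at_top"
  proof eventually_elim
    case (elim t)
    then have "t > 1" "1 / t < V Z" using V_pos[of Z] by (auto simp: field_simps)
    then show ?case using U0_le_iff[of t Z] by auto
  qed
qed

lemma eventually_U0: "eventually P at_top \<Longrightarrow> eventually (\<lambda>t. P (U0 t)) at_top"
  using filterlim_iff[THEN iffD1, OF filterlim_U0_at_top] by blast

lemma eventually_U0_pos: "eventually (\<lambda>t. U0 t > 0) at_top"
  using filterlim_U0_at_top by (simp add: filterlim_at_top_dense)

lemma V_U0_le: "t > 1 \<Longrightarrow> V (U0 t) \<le> 1 / t"
  using U0_le_iff[of t "U0 t"] by simp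

lemma powr_gamma_inverse: "l > 0 \<Longrightarrow> (l powr \<gamma>) powr (-1/\<gamma>) = 1 / l"
  using gamma_pos by (simp add: powr_powr powr_minus divide_inverse)

lemma tail_ratio_rescaled:
  assumes W: "((\<lambda>x. W x / V x) \<longlongrightarrow> l) at_top" and "a > 0" "b > 0"
  shows "((\<lambda>y. W (a * y) / V (b * y)) \<longlongrightarrow> l * (a / b) powr (-1/\<gamma>)) at_top"
proof -
  have "((\<lambda>y. W (a * y) / V (a * y)) \<longlongrightarrow> l) at_top"
    by (rule filterlim_compose[OF W filterlim_const_mult_at_top]) fact
  moreover have "((\<lambda>y. V ((a / b) * (b * y)) / V (b * y)) \<longlongrightarrow> (a / b) powr (-1/\<gamma>)) at_top"
    using assms by (intro filterlim_compose[OF V_regularly_varying filterlim_const_mult_at_top]) auto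
  ultimately have "((\<lambda>y. W (a * y) / V (a * y) * (V (a * y) / V (b * y))) \<longlongrightarrow> l * (a / b) powr (-1/\<gamma>)) at_top"
    using assms by (intro tendsto_mult) auto
  moreover have eq: "W (a * y) / V (a * y) * (V (a * y) / V (b * y)) = W (a * y) / V (b * y)" for y
    using V_pos[of "a * y"] V_pos[of "b * y"] by (simp add: divide_simps)
  ultimately show ?thesis by (simp only: eq)
qed

lemma quantile_upper_if_tail_ratio:
  assumes W: "((\<lambda>x. W x / V x) \<longlongrightarrow> l) at_top" and l: "l > 0" and \<theta>: "\<theta> > l powr \<gamma>"
  shows "eventually (\<lambda>t. Us t \<le> \<theta> * U0 t) at_top"
proof -
  have "l powr \<gamma> > 0" using l by simp
  then have \<theta>_pos: "\<theta> > 0" using \<theta> by linarith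
  have "\<theta> powr (-1/\<gamma>) < (l powr \<gamma>) powr (-1/\<gamma>)"
    using \<theta> l gamma_pos by (intro powr_less_mono2_neg) auto
  also have "\<dots> = 1 / l" using l by (rule powr_gamma_inverse)
  finally have "l * (\<theta> / 1) powr (-1/\<gamma>) < 1" using l by (simp add: field_simps)
  then have "eventually (\<lambda>y. W (\<theta> * y) / V (1 * y) < 1) at_top"
    using tail_ratio_rescaled[OF W \<theta>_pos, of 1] by (intro order_tendstoD) auto
  then have "eventually (\<lambda>t. W (\<theta> * U0 t) / V (U0 t) < 1) at_top"
    by (auto intro: eventually_U0)
  with eventually_gt_at_top[of 1] show ?thesis
  proof eventually_elim
    case (elim t)
    then have "W (\<theta> * U0 t) < V (U0 t)" using V_pos[of "U0 t"] by (simp add: field_simps)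
    then have "W (\<theta> * U0 t) \<le> 1 / t" using V_U0_le[OF elim(1)] by linarith
    then show ?case using Us_le_iff[OF elim(1)] by simp
  qed
qed

lemma quantile_lower_if_tail_ratio:
  assumes W: "((\<lambda>x. W x / V x) \<longlongrightarrow> l) at_top" and l: "l > 0"
    and \<theta>: "0 < \<theta>" "\<theta> < l powr \<gamma>"
  shows "eventually (\<lambda>t. \<theta> * U0 t < Us t) at_top"
proof -
  define \<delta> where "\<delta> = (\<theta> / l powr \<gamma> + 1) / 2"
  have "0 < \<theta> / l powr \<gamma>" "\<theta> / l powr \<gamma> < 1" using \<theta> l by (auto simp: field_simps)
  then have \<delta>: "0 < \<delta>" "\<delta> < 1" "\<theta> / \<delta> < l powr \<gamma>" using \<theta> by (auto simp: \<delta>_def field_simps)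
  have "1 / l = (l powr \<gamma>) powr (-1/\<gamma>)" using l by (rule powr_gamma_inverse[symmetric])
  also have "\<dots> < (\<theta> / \<delta>) powr (-1/\<gamma>)"
    using \<delta> \<theta> gamma_pos by (intro powr_less_mono2_neg) auto
  finally have "1 < l * (\<theta> / \<delta>) powr (-1/\<gamma>)" using l by (simp add: field_simps)
  then have "eventually (\<lambda>y. 1 < W (\<theta> * y) / V (\<delta> * y)) at_top"
    using tail_ratio_rescaled[OF W \<theta>(1) \<delta>(1)] by (intro order_tendstoD) auto
  then have "eventually (\<lambda>t. 1 < W (\<theta> * U0 t) / V (\<delta> * U0 t)) at_top"
    by (rule eventually_U0)
  with eventually_U0_pos show ?thesis using eventually_gt_at_top[of 1]
  proof eventually_elim
    case (elim t)
    have "\<not> U0 t \<le> \<delta> * U0 t" using \<delta>(2) elim(1) by simp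
    then have "1 / t < V (\<delta> * U0 t)" using U0_le_iff[OF elim(3)] by simp
    moreover have "V (\<delta> * U0 t) < W (\<theta> * U0 t)"
      using elim(2) V_pos[of "\<delta> * U0 t"] by (simp add: field_simps)
    ultimately show ?case using Us_le_iff[OF elim(3), of "\<theta> * U0 t"] by auto
  qed
qed

lemma eventually_inverse_scaled_V:
  assumes \<kappa>: "\<kappa> > 0" and P: "eventually P at_top"
  shows "eventually (\<lambda>x. P (inverse (\<kappa> * V x))) at_top"
proof -
  have "((\<lambda>x. \<kappa> * V x) \<longlongrightarrow> 0) at_top" using tendsto_mult_right_zero[OF V_tendsto_zero] .
  moreover have "\<forall>x. \<kappa> * V x \<in> {0<..} \<and> \<kappa> * V x \<noteq> 0" using \<kappa> V_pos by (metis greaterThan_iff less_irrefl mult_pos_pos)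
  ultimately have "filterlim (\<lambda>x. \<kappa> * V x) (at_right 0) at_top"
    unfolding filterlim_at by (auto intro: always_eventually)
  then have "filterlim (\<lambda>x. inverse (\<kappa> * V x)) at_top at_top"
    by (rule filterlim_compose[OF filterlim_inverse_at_top_right])
  then show ?thesis using P by (simp add: filterlim_iff)
qed

text \<open>For the converse, the quantile bounds are evaluated at \<open>t = 1 / (\<kappa> V x)\<close>.\<close>

lemma tail_upper_if_quantile_ratio:
  assumes U: "((\<lambda>t. Us t / U0 t) \<longlongrightarrow> l powr \<gamma>) at_top" and l: "l > 0" and \<kappa>: "\<kappa> > l"
  shows "eventually (\<lambda>x. W x \<le> \<kappa> * V x) at_top"
proof -
  define \<theta> where "\<theta> = (l powr \<gamma> + \<kappa> powr \<gamma>) / 2"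
  have "l powr \<gamma> < \<kappa> powr \<gamma>" using \<kappa> l gamma_pos by (intro powr_less_mono2) auto
  then have \<theta>: "l powr \<gamma> < \<theta>" "\<theta> < \<kappa> powr \<gamma>" by (auto simp: \<theta>_def)
  moreover have "l powr \<gamma> > 0" using l by simp
  ultimately have \<theta>_pos: "\<theta> > 0" by linarith
  have "eventually (\<lambda>t. Us t / U0 t < \<theta> \<and> U0 t > 0 \<and> t > 1) at_top"
    using order_tendstoD(2)[OF U \<theta>(1)] eventually_U0_pos eventually_gt_at_top[of 1]
    by eventually_elim auto
  then have "eventually (\<lambda>x. Us (inverse (\<kappa> * V x)) / U0 (inverse (\<kappa> * V x)) < \<theta> \<and>
      U0 (inverse (\<kappa> * V x)) > 0 \<and> inverse (\<kappa> * V x) > 1) at_top"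
    using \<kappa> l by (intro eventually_inverse_scaled_V) auto
  moreover have "(1 / \<theta>) powr (-1/\<gamma>) < \<kappa>"
  proof -
    have "(1 / \<theta>) powr (-1/\<gamma>) = \<theta> powr (1/\<gamma>)" using \<theta>_pos by (simp add: powr_divide powr_minus_divide)
    also have "\<dots> < (\<kappa> powr \<gamma>) powr (1/\<gamma>)" using \<theta> \<theta>_pos gamma_pos by (intro powr_less_mono2) auto
    also have "\<dots> = \<kappa>" using gamma_pos \<kappa> l by (simp add: powr_powr)
    finally show ?thesis .
  qed
  then have "eventually (\<lambda>x. V ((1 / \<theta>) * x) / V x < \<kappa>) at_top"
    using V_regularly_varying[of "1/\<theta>"] \<theta>_pos by (intro order_tendstoD) auto
  ultimately show ?thesis
  proof eventually_elim
    case (elim x)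
    define t where "t = inverse (\<kappa> * V x)"
    have t: "t > 1" "Us t < \<theta> * U0 t" using elim(1) by (auto simp: t_def field_simps)
    have "V (x / \<theta>) \<le> 1 / t" using elim(2) V_pos[of x] by (simp add: t_def field_simps)
    then have "U0 t \<le> x / \<theta>" using U0_le_iff[OF t(1)] by simp
    then have "\<theta> * U0 t \<le> x" using \<theta>_pos by (simp add: field_simps)
    then have "Us t \<le> x" using t(2) by linarith
    moreover have "1 / t = \<kappa> * V x" by (simp add: t_def divide_inverse)
    ultimately show ?case using Us_le_iff[OF t(1)] by simp
  qed
qed

lemma tail_lower_if_quantile_ratio:
  assumes U: "((\<lambda>t. Us t / U0 t) \<longlongrightarrow> l powr \<gamma>) at_top" and \<kappa>: "0 < \<kappa>" "\<kappa> < l"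
  shows "eventually (\<lambda>x. \<kappa> * V x < W x) at_top"
proof -
  define \<theta> where "\<theta> = (\<kappa> powr \<gamma> + l powr \<gamma>) / 2"
  have "\<kappa> powr \<gamma> < l powr \<gamma>" using \<kappa> gamma_pos by (intro powr_less_mono2) auto
  moreover have "\<kappa> powr \<gamma> > 0" using \<kappa> by simp
  ultimately have \<theta>: "\<kappa> powr \<gamma> < \<theta>" "\<theta> < l powr \<gamma>" by (simp_all add: \<theta>_def field_simps)
  with \<open>\<kappa> powr \<gamma> > 0\<close> have \<theta>_pos: "\<theta> > 0" by linarith
  have "eventually (\<lambda>t. \<theta> < Us t / U0 t \<and> U0 t > 0 \<and> t > 1) at_top"
    using order_tendstoD(1)[OF U \<theta>(2)] eventually_U0_pos eventually_gt_at_top[of 1]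
    by eventually_elim auto
  then have "eventually (\<lambda>x. \<theta> < Us (inverse (\<kappa> * V x)) / U0 (inverse (\<kappa> * V x)) \<and>
      U0 (inverse (\<kappa> * V x)) > 0 \<and> inverse (\<kappa> * V x) > 1) at_top"
    using \<kappa> by (intro eventually_inverse_scaled_V) auto
  moreover have "\<kappa> < (1 / \<theta>) powr (-1/\<gamma>)"
  proof -
    have "\<kappa> = (\<kappa> powr \<gamma>) powr (1/\<gamma>)" using gamma_pos \<kappa> by (simp add: powr_powr)
    also have "\<dots> < \<theta> powr (1/\<gamma>)" using \<theta> \<kappa> gamma_pos by (intro powr_less_mono2) auto
    also have "\<dots> = (1 / \<theta>) powr (-1/\<gamma>)" using \<theta>_pos by (simp add: powr_divide powr_minus_divide)
    finally show ?thesis .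
  qed
  then have "eventually (\<lambda>x. \<kappa> < V ((1 / \<theta>) * x) / V x) at_top"
    using V_regularly_varying[of "1/\<theta>"] \<theta>_pos by (intro order_tendstoD) auto
  ultimately show ?thesis
  proof eventually_elim
    case (elim x)
    define t where "t = inverse (\<kappa> * V x)"
    have t: "t > 1" "\<theta> * U0 t < Us t" using elim(1) by (auto simp: t_def field_simps)
    have "1 / t < V (x / \<theta>)" using elim(2) V_pos[of x] by (simp add: t_def field_simps)
    then have "\<not> U0 t \<le> x / \<theta>" using U0_le_iff[OF t(1)] by simp
    then have "x < \<theta> * U0 t" using \<theta>_pos by (simp add: field_simps)
    then have "\<not> Us t \<le> x" using t(2) by linarith
    moreover have "1 / t = \<kappa> * V x" by (simp add: t_def divide_inverse)
    ultimately show ?case using Us_le_iff[OF t(1)] by simp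
  qed
qed

theorem tail_ratio_tendsto_iff_quantile_ratio_tendsto:
  assumes l: "l > 0"
  shows "((\<lambda>x. W x / V x) \<longlongrightarrow> l) at_top \<longleftrightarrow> ((\<lambda>t. Us t / U0 t) \<longlongrightarrow> l powr \<gamma>) at_top"
proof
  assume W: "((\<lambda>x. W x / V x) \<longlongrightarrow> l) at_top"
  show "((\<lambda>t. Us t / U0 t) \<longlongrightarrow> l powr \<gamma>) at_top"
  proof (rule ratio_tendstoI)
    show "l powr \<gamma> > 0" using l by simp
  qed (fact eventually_U0_pos quantile_upper_if_tail_ratio[OF W l]
      quantile_lower_if_tail_ratio[OF W l])+
next
  assume U: "((\<lambda>t. Us t / U0 t) \<longlongrightarrow> l powr \<gamma>) at_top"
  show "((\<lambda>x. W x / V x) \<longlongrightarrow> l) at_top"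
  proof (rule ratio_tendstoI)
    show "\<forall>\<^sub>F x in at_top. V x > 0" using V_pos by simp
  qed (fact l tail_upper_if_quantile_ratio[OF U l] tail_lower_if_quantile_ratio[OF U])+
qed

end

theorem mainTheorem5:
  fixes F0 Fs :: "real \<Rightarrow> real" and c s \<gamma> :: real
  assumes "distribution_function F0" and "distribution_function Fs"
    and "s \<ge> 0" and "\<gamma> > 0"
    and "max_domain_of_attraction F0 \<gamma>"
  shows "((\<lambda>x. (1 - Fs x) / (1 - F0 x)) \<longlongrightarrow> exp (c * s)) at_top \<longleftrightarrow>
         ((\<lambda>t. tail_quantile Fs t / tail_quantile F0 t) \<longlongrightarrow> exp (c * \<gamma> * s)) at_top"
proof -
  interpret quantile_comparison "\<lambda>x. 1 - F0 x" "\<lambda>x. 1 - Fs x" "tail_quantile F0" "tail_quantile Fs" \<gamma>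
  proof
    show "\<And>t x. 1 < t \<Longrightarrow> tail_quantile F0 t \<le> x \<longleftrightarrow> 1 - F0 x \<le> 1 / t"
      "\<And>t x. 1 < t \<Longrightarrow> tail_quantile Fs t \<le> x \<longleftrightarrow> 1 - Fs x \<le> 1 / t"
      using tail_quantile_le_iff[OF assms(1)] tail_quantile_le_iff[OF assms(2)] by simp_all
    show "\<And>x. 0 < 1 - F0 x" "\<And>c. 0 < c \<Longrightarrow> ((\<lambda>y. (1 - F0 (c * y)) / (1 - F0 y)) \<longlongrightarrow> c powr (-1/\<gamma>)) at_top"
      using max_domain_of_attraction_regularly_varying[OF assms(1,4,5)] by simp_all
    have "(F0 \<longlongrightarrow> 1) at_top" using assms(1) by (simp add: distribution_function_def)
    then show "((\<lambda>x. 1 - F0 x) \<longlongrightarrow> 0) at_top" using tendsto_diff[OF tendsto_const, of F0 1 at_top 1] by simp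
  qed fact
  have "exp (c * s) powr \<gamma> = exp (c * \<gamma> * s)" by (simp add: powr_def mult_ac)
  then show ?thesis using tail_ratio_tendsto_iff_quantile_ratio_tendsto[of "exp (c * s)"] by simp
qed

end
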